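(* Let $\kappa$ be an infinite cardinal. The map $g\colon\mathcal{F}(\kappa)\times\mathcal{F}(\kappa)\to M_3[\mathcal{F}(\kappa)]$, $g(A,C)=(A,\,A\cap C,\,C)$, is a bounded lattice embedding. In particular, the range of $g$ is a bounded Boolean sublattice of $M_3[\mathcal{F}(\kappa)]$ isomorphic to $\mathcal{F}(\kappa)\times\mathcal{F}(\kappa)$.
   Context: $\mathcal{F}(\kappa)$ is the Boolean lattice of subsets $X\subseteq\kappa$ that are finite or cofinite. For sets $A,B,C$, $\mu(A,B,C)=(A\cap B)\cup(A\cap C)\cup(B\cap C)$. A triple is balanced if $A\cap B=A\cap C=B\cap C$; $M_3[\mathcal{F}(\kappa)]$ is the set of balanced triples in $\mathcal{F}(\kappa)^3$, a lattice under the componentwise order with componentwise intersection as meet and join $(A,B,C)\vee(A',B',C')=(U_1\cup m,U_2\cup m,U_3\cup m)$ where $U_1=A\cup A'$, $U_2=B\cup B'$, $U_3=C\cup C'$, $m=\mu(U_1,U_2,U_3)$; its bounds are $(\emptyset,\emptyset,\emptyset)$ and $(\kappa,\kappa,\kappa)$. *)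

theory Defs
  imports Main
begin

text \<open>The kappa of the paper is modelled by an arbitrary infinite set K.
  F(K): subsets of K that are finite or cofinite (relative to K).\<close>
definition FinCofin :: "'a set \<Rightarrow> 'a set set" where
  "FinCofin K = {X. X \<subseteq> K \<and> (finite X \<or> finite (K - X))}"

definition med :: "'a set \<Rightarrow> 'a set \<Rightarrow> 'a set \<Rightarrow> 'a set" where
  "med A B C = (A \<inter> B) \<union> (A \<inter> C) \<union> (B \<inter> C)"

definition balanced :: "'a set \<times> 'a set \<times> 'a set \<Rightarrow> bool" where
  "balanced t = (case t of (A, B, C) \<Rightarrow> A \<inter> B = A \<inter> C \<and> A \<inter> C = B \<inter> C)"

definition M3 :: "'a set \<Rightarrow> ('a set \<times> 'a set \<times> 'a set) set" where
  "M3 K = {(A, B, C). A \<in> FinCofin K \<and> B \<in> FinCofin K \<and> C \<in> FinCofin K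
                      \<and> balanced (A, B, C)}"

definition m3_meet :: "'a set \<times> 'a set \<times> 'a set \<Rightarrow> 'a set \<times> 'a set \<times> 'a set
                        \<Rightarrow> 'a set \<times> 'a set \<times> 'a set" where
  "m3_meet s t = (case s of (A, B, C) \<Rightarrow> case t of (A', B', C') \<Rightarrow>
                    (A \<inter> A', B \<inter> B', C \<inter> C'))"

definition m3_join :: "'a set \<times> 'a set \<times> 'a set \<Rightarrow> 'a set \<times> 'a set \<times> 'a set
                        \<Rightarrow> 'a set \<times> 'a set \<times> 'a set" where
  "m3_join s t = (case s of (A, B, C) \<Rightarrow> case t of (A', B', C') \<Rightarrow>
                    (let U1 = A \<union> A'; U2 = B \<union> B'; U3 = C \<union> C'; m = med U1 U2 U3
                     in (U1 \<union> m, U2 \<union> m, U3 \<union> m)))"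

definition m3_bot :: "'a set \<times> 'a set \<times> 'a set" where
  "m3_bot = ({}, {}, {})"

definition m3_top :: "'a set \<Rightarrow> 'a set \<times> 'a set \<times> 'a set" where
  "m3_top K = (K, K, K)"

definition gmap :: "'a set \<times> 'a set \<Rightarrow> 'a set \<times> 'a set \<times> 'a set" where
  "gmap p = (case p of (A, C) \<Rightarrow> (A, A \<inter> C, C))"

end

theory Submission
  imports Defs
begin

text \<open>g(A,C) is balanced because all three pairwise intersections equal A \<inter> C, and g is
  injective because A and C are its outer coordinates. The meet of M3 is componentwise, and on
  the range of g the median correction in the join is absorbed, since
  med (A \<union> A') ((A \<inter> C) \<union> (A' \<inter> C')) (C \<union> C') \<subseteq> (A \<union> A') \<inter> (C \<union> C').
  So g is a lattice homomorphism on the product, and complements (K - A, K - C) carry over.\<close>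

lemma FinCofin_subset: "A \<in> FinCofin K \<Longrightarrow> A \<subseteq> K"
  unfolding FinCofin_def by auto

lemma FinCofin_empty: "{} \<in> FinCofin K"
  and FinCofin_top: "K \<in> FinCofin K"
  unfolding FinCofin_def by auto

lemma FinCofin_Int: "A \<in> FinCofin K \<Longrightarrow> B \<in> FinCofin K \<Longrightarrow> A \<inter> B \<in> FinCofin K"
  unfolding FinCofin_def by (auto simp: Diff_Int)

lemma FinCofin_Un: "A \<in> FinCofin K \<Longrightarrow> B \<in> FinCofin K \<Longrightarrow> A \<union> B \<in> FinCofin K"
  unfolding FinCofin_def by (auto simp: Diff_Un)

lemma FinCofin_Diff: "A \<in> FinCofin K \<Longrightarrow> K - A \<in> FinCofin K"
  unfolding FinCofin_def by (auto simp: double_diff)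

lemma m3_meet_gmap: "m3_meet (gmap (A, C)) (gmap (A', C')) = gmap (A \<inter> A', C \<inter> C')"
  unfolding m3_meet_def gmap_def by auto

lemma m3_join_gmap: "m3_join (gmap (A, C)) (gmap (A', C')) = gmap (A \<union> A', C \<union> C')"
  unfolding m3_join_def gmap_def med_def Let_def by auto

lemma gmap_empty: "gmap ({}, {}) = m3_bot"
  by (simp add: gmap_def m3_bot_def)

lemma gmap_top: "gmap (K, K) = m3_top K"
  by (simp add: gmap_def m3_top_def)

lemma inj_gmap: "inj gmap"
  by (auto simp: inj_def gmap_def)

lemma balanced_gmap: "balanced (gmap (A, C))"
  by (auto simp: gmap_def balanced_def)

lemma gmap_in_M3: "A \<in> FinCofin K \<Longrightarrow> C \<in> FinCofin K \<Longrightarrow> gmap (A, C) \<in> M3 K"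
  using balanced_gmap[of A C] by (auto simp: M3_def gmap_def intro: FinCofin_Int)

lemma gmap_complement:
  assumes "A \<subseteq> K" "C \<subseteq> K"
  shows "m3_meet (gmap (A, C)) (gmap (K - A, K - C)) = m3_bot"
    and "m3_join (gmap (A, C)) (gmap (K - A, K - C)) = m3_top K"
  using assms by (simp_all only: m3_meet_gmap m3_join_gmap) (auto simp: gmap_def m3_bot_def m3_top_def)

theorem lemma5p1:
  fixes K :: "'a set"
  assumes "infinite K"
  defines "F \<equiv> FinCofin K"
  shows "gmap ` (F \<times> F) \<subseteq> M3 K
    \<and> inj_on gmap (F \<times> F)
    \<and> (\<forall>A\<in>F. \<forall>C\<in>F. \<forall>A'\<in>F. \<forall>C'\<in>F.
          gmap (A \<inter> A', C \<inter> C') = m3_meet (gmap (A, C)) (gmap (A', C'))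
        \<and> gmap (A \<union> A', C \<union> C') = m3_join (gmap (A, C)) (gmap (A', C')))
    \<and> gmap ({}, {}) = m3_bot
    \<and> gmap (K, K) = m3_top K
    \<and> (\<forall>x\<in>gmap ` (F \<times> F). \<forall>y\<in>gmap ` (F \<times> F).
          m3_meet x y \<in> gmap ` (F \<times> F) \<and> m3_join x y \<in> gmap ` (F \<times> F))
    \<and> m3_bot \<in> gmap ` (F \<times> F) \<and> m3_top K \<in> gmap ` (F \<times> F)
    \<and> (\<forall>x\<in>gmap ` (F \<times> F). \<exists>y\<in>gmap ` (F \<times> F).
          m3_meet x y = m3_bot \<and> m3_join x y = m3_top K)
    \<and> bij_betw gmap (F \<times> F) (gmap ` (F \<times> F))"
proof -
  have inj: "inj_on gmap (F \<times> F)"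
    using inj_gmap by (rule inj_on_subset) simp
  have closed: "\<forall>x\<in>gmap ` (F \<times> F). \<forall>y\<in>gmap ` (F \<times> F).
          m3_meet x y \<in> gmap ` (F \<times> F) \<and> m3_join x y \<in> gmap ` (F \<times> F)"
    by (auto simp: m3_meet_gmap m3_join_gmap F_def intro!: imageI FinCofin_Int FinCofin_Un)
  have bounds: "m3_bot \<in> gmap ` (F \<times> F)" "m3_top K \<in> gmap ` (F \<times> F)"
    unfolding F_def gmap_empty[symmetric] gmap_top[symmetric]
    by (simp_all add: FinCofin_empty FinCofin_top)
  have complemented: "\<forall>x\<in>gmap ` (F \<times> F). \<exists>y\<in>gmap ` (F \<times> F).
          m3_meet x y = m3_bot \<and> m3_join x y = m3_top K"
  proof
    fix x assume "x \<in> gmap ` (F \<times> F)"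
    then obtain A C where "A \<in> F" "C \<in> F" and x: "x = gmap (A, C)" by auto
    moreover have "A \<subseteq> K" "C \<subseteq> K"
      using \<open>A \<in> F\<close> \<open>C \<in> F\<close> unfolding F_def by (simp_all add: FinCofin_subset)
    moreover have "gmap (K - A, K - C) \<in> gmap ` (F \<times> F)"
      using \<open>A \<in> F\<close> \<open>C \<in> F\<close> unfolding F_def by (auto intro: FinCofin_Diff)
    ultimately show "\<exists>y\<in>gmap ` (F \<times> F). m3_meet x y = m3_bot \<and> m3_join x y = m3_top K"
      unfolding x using gmap_complement by blast
  qed
  have "gmap ` (F \<times> F) \<subseteq> M3 K"
    unfolding F_def by (auto intro: gmap_in_M3)
  then show ?thesis
    using inj closed bounds complemented
    by (simp add: m3_meet_gmap m3_join_gmap gmap_empty gmap_top[of K] bij_betw_def)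
qed

end
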